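(* Let $G=(V,E)$ be a chain graph. An edge $e\in E$ is chain-safe (i.e., $G-e$ is a chain graph) if and only if $e$ is not the middle edge of an induced $P_4$ in $G$.
   Context: A chain graph is a bipartite graph whose vertex set can be partitioned into two independent sets $X,Y$ such that the neighborhoods of the vertices of $X$ are linearly ordered by inclusion. The middle edge of a path $P_4$ is the edge joining its two degree-2 vertices. *)

theory Defs
  imports Main
begin

definition graph :: "'a set \<Rightarrow> 'a set set \<Rightarrow> bool" where
  "graph V E \<longleftrightarrow> finite V \<and> (\<forall>e\<in>E. \<exists>u v. e = {u, v} \<and> u \<noteq> v \<and> u \<in> V \<and> v \<in> V)"

definition nbhd :: "'a set set \<Rightarrow> 'a \<Rightarrow> 'a set" where
  "nbhd E v = {u. {u, v} \<in> E}"

definition independent :: "'a set set \<Rightarrow> 'a set \<Rightarrow> bool" where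
  "independent E S \<longleftrightarrow> (\<forall>u\<in>S. \<forall>v\<in>S. {u, v} \<notin> E)"

definition chain_graph :: "'a set \<Rightarrow> 'a set set \<Rightarrow> bool" where
  "chain_graph V E \<longleftrightarrow> graph V E \<and>
     (\<exists>X Y. X \<union> Y = V \<and> X \<inter> Y = {} \<and> independent E X \<and> independent E Y \<and>
        (\<forall>x\<in>X. \<forall>x'\<in>X. nbhd E x \<subseteq> nbhd E x' \<or> nbhd E x' \<subseteq> nbhd E x))"

definition middle_edge_of_induced_P4 :: "'a set \<Rightarrow> 'a set set \<Rightarrow> 'a set \<Rightarrow> bool" where
  "middle_edge_of_induced_P4 V E e \<longleftrightarrow>
     (\<exists>a u v b. e = {u, v} \<and> a \<in> V \<and> u \<in> V \<and> v \<in> V \<and> b \<in> V \<and> distinct [a, u, v, b] \<and>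
        {a, u} \<in> E \<and> {u, v} \<in> E \<and> {v, b} \<in> E \<and>
        {a, v} \<notin> E \<and> {u, b} \<notin> E \<and> {a, b} \<notin> E)"

end

theory Submission
  imports Defs
begin

text \<open>Deleting the middle edge u-v of an induced P4 a-u-v-b leaves the induced matching
  {a, u}, {v, b}, and a graph with nested neighbourhoods on one side of a bipartition has no
  induced 2K2. Conversely, deleting an edge p-q with p \<in> X only shrinks the neighbourhood of p,
  by q. If that breaks nestedness, some w \<in> X must have a neighbourhood that was contained in
  the one of p and contains q, while p has a neighbour y outside that of w; then y-p-q-w is an
  induced P4 with middle edge p-q.\<close>

definition chain_bipartition :: "'a set \<Rightarrow> 'a set set \<Rightarrow> 'a set \<Rightarrow> 'a set \<Rightarrow> bool" where
  "chain_bipartition V E X Y \<longleftrightarrow> X \<union> Y = V \<and> X \<inter> Y = {} \<and> independent E X \<and> independent E Y \<and>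
     (\<forall>x\<in>X. \<forall>x'\<in>X. nbhd E x \<subseteq> nbhd E x' \<or> nbhd E x' \<subseteq> nbhd E x)"

lemma chain_graph_iff_chain_bipartition:
  "chain_graph V E \<longleftrightarrow> graph V E \<and> (\<exists>X Y. chain_bipartition V E X Y)"
  unfolding chain_graph_def chain_bipartition_def by blast

lemma mem_nbhd_iff: "y \<in> nbhd E x \<longleftrightarrow> {x, y} \<in> E"
  by (auto simp: nbhd_def insert_commute)

lemma graph_edgeD:
  assumes "graph V E" "{a, b} \<in> E"
  shows "a \<noteq> b" "a \<in> V" "b \<in> V"
  using assms unfolding graph_def by (force simp: doubleton_eq_iff)+

lemma graph_Diff: "graph V E \<Longrightarrow> graph V (E - F)"
  unfolding graph_def by blast

lemma independent_Diff: "independent E S \<Longrightarrow> independent (E - F) S"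
  unfolding independent_def by blast

lemma chain_bipartition_edge_crosses:
  assumes "chain_bipartition V E X Y" "{a, b} \<in> E" "a \<in> V" "b \<in> V"
  shows "(a \<in> X \<and> b \<in> Y) \<or> (a \<in> Y \<and> b \<in> X)"
  using assms unfolding chain_bipartition_def independent_def by blast

lemma chain_bipartition_no_induced_2K2:
  assumes XY: "chain_bipartition V E X Y"
    and V: "a \<in> V" "u \<in> V" "v \<in> V" "b \<in> V"
    and edges: "{a, u} \<in> E" "{v, b} \<in> E"
    and non_edges: "{u, v} \<notin> E" "{a, v} \<notin> E" "{u, b} \<notin> E" "{a, b} \<notin> E"
  shows False
proof -
  obtain x y where xy: "{x, y} = {a, u}" "x \<in> X"
    using chain_bipartition_edge_crosses[OF XY edges(1) V(1,2)] by (metis insert_commute)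
  obtain x' z where x'z: "{x', z} = {v, b}" "x' \<in> X"
    using chain_bipartition_edge_crosses[OF XY edges(2) V(3,4)] by (metis insert_commute)
  have "y \<in> nbhd E x" "z \<in> nbhd E x'"
    using xy x'z edges by (simp_all add: mem_nbhd_iff)
  moreover have "y \<notin> nbhd E x'" "z \<notin> nbhd E x"
    using xy x'z non_edges by (auto simp: mem_nbhd_iff doubleton_eq_iff insert_commute)
  moreover have "nbhd E x \<subseteq> nbhd E x' \<or> nbhd E x' \<subseteq> nbhd E x"
    using XY xy(2) x'z(2) unfolding chain_bipartition_def by blast
  ultimately show False by blast
qed

lemma chain_graph_Diff_middle_edge:
  assumes "middle_edge_of_induced_P4 V E e"
  shows "\<not> chain_graph V (E - {e})"
proof
  assume "chain_graph V (E - {e})"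
  then obtain X Y where XY: "chain_bipartition V (E - {e}) X Y"
    unfolding chain_graph_iff_chain_bipartition by blast
  from assms obtain a u v b where P4: "e = {u, v}" "a \<in> V" "u \<in> V" "v \<in> V" "b \<in> V"
      "distinct [a, u, v, b]" "{a, u} \<in> E" "{v, b} \<in> E"
      "{a, v} \<notin> E" "{u, b} \<notin> E" "{a, b} \<notin> E"
    unfolding middle_edge_of_induced_P4_def by blast
  then have "{a, u} \<in> E - {e}" "{v, b} \<in> E - {e}"
    by (auto simp: doubleton_eq_iff)
  with P4 show False
    by (intro chain_bipartition_no_induced_2K2[OF XY, of a u v b]) auto
qed

lemma nbhd_Diff_edge_other:
  "x \<noteq> p \<Longrightarrow> x \<noteq> q \<Longrightarrow> nbhd (E - {{p, q}}) x = nbhd E x"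
  by (auto simp: nbhd_def doubleton_eq_iff)

lemma nbhd_Diff_edge_endpoint: "nbhd (E - {{p, q}}) p = nbhd E p - {q}"
  by (auto simp: nbhd_def doubleton_eq_iff)

lemma middle_edge_of_induced_P4_if_private_neighbour:
  assumes XY: "chain_bipartition V E X Y" and G: "graph V E"
    and pq: "{p, q} \<in> E" "p \<in> X" "q \<in> Y"
    and w: "w \<in> X" "w \<noteq> p" "{w, q} \<in> E"
    and y: "{p, y} \<in> E" "y \<noteq> q" "{w, y} \<notin> E"
  shows "middle_edge_of_induced_P4 V E {p, q}"
proof -
  have "y \<in> V" "y \<noteq> p" using graph_edgeD[OF G y(1)] by simp_all
  moreover have "y \<in> Y"
    using chain_bipartition_edge_crosses[OF XY y(1)] graph_edgeD[OF G y(1)] pq(2) XY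
    unfolding chain_bipartition_def by blast
  moreover have "X \<inter> Y = {}" "X \<union> Y = V" "independent E X" "independent E Y"
    using XY unfolding chain_bipartition_def by simp_all
  ultimately show ?thesis
    unfolding middle_edge_of_induced_P4_def independent_def
    using pq w y by (intro exI[of _ y] exI[of _ p] exI[of _ q] exI[of _ w]) (auto simp: insert_commute)
qed

lemma chain_bipartition_Diff_edge:
  assumes XY: "chain_bipartition V E X Y" and G: "graph V E"
    and pq: "{p, q} \<in> E" "p \<in> X" "q \<in> Y"
    and not_middle: "\<not> middle_edge_of_induced_P4 V E {p, q}"
  shows "chain_bipartition V (E - {{p, q}}) X Y"
proof -
  let ?N = "nbhd (E - {{p, q}})"
  have nested: "\<forall>x\<in>X. \<forall>x'\<in>X. nbhd E x \<subseteq> nbhd E x' \<or> nbhd E x' \<subseteq> nbhd E x"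
    using XY unfolding chain_bipartition_def by blast
  have same_nbhd: "?N x = nbhd E x" if "x \<in> X" "x \<noteq> p" for x
  proof -
    have "x \<noteq> q" using that pq(3) XY unfolding chain_bipartition_def by blast
    with that(2) show ?thesis by (rule nbhd_Diff_edge_other)
  qed
  have nested_at_p: "?N w \<subseteq> ?N p \<or> ?N p \<subseteq> ?N w" if w: "w \<in> X" "w \<noteq> p" for w
  proof (rule disjCI)
    assume "\<not> ?N p \<subseteq> ?N w"
    then obtain y where "y \<in> nbhd E p - {q}" "y \<notin> nbhd E w"
      unfolding same_nbhd[OF w] nbhd_Diff_edge_endpoint by blast
    then have y: "{p, y} \<in> E" "y \<noteq> q" "{w, y} \<notin> E"
      by (simp_all add: mem_nbhd_iff)
    have "\<not> nbhd E p \<subseteq> nbhd E w"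
      using y by (auto simp: mem_nbhd_iff)
    then have "nbhd E w \<subseteq> nbhd E p"
      using nested w(1) pq(2) by blast
    moreover have "{w, q} \<notin> E"
      using middle_edge_of_induced_P4_if_private_neighbour[OF XY G pq w _ y] not_middle by blast
    ultimately show "?N w \<subseteq> ?N p"
      unfolding same_nbhd[OF w] nbhd_Diff_edge_endpoint by (auto simp: mem_nbhd_iff)
  qed
  have "?N x \<subseteq> ?N x' \<or> ?N x' \<subseteq> ?N x" if x: "x \<in> X" "x' \<in> X" for x x'
  proof (cases "x = p \<or> x' = p")
    case True
    with x nested_at_p show ?thesis by (cases "x = x'") auto
  next
    case False
    with x nested same_nbhd show ?thesis by simp
  qed
  then show ?thesis
    using XY independent_Diff unfolding chain_bipartition_def by blast
qed

lemma chain_graph_Diff_edge: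
  assumes "chain_graph V E" "e \<in> E" "\<not> middle_edge_of_induced_P4 V E e"
  shows "chain_graph V (E - {e})"
proof -
  obtain X Y where XY: "chain_bipartition V E X Y" and G: "graph V E"
    using assms(1) unfolding chain_graph_iff_chain_bipartition by blast
  obtain s t where e: "e = {s, t}"
    using G assms(2) unfolding graph_def by blast
  with assms(2) have st: "{s, t} \<in> E"
    by simp
  have "(s \<in> X \<and> t \<in> Y) \<or> (s \<in> Y \<and> t \<in> X)"
    using chain_bipartition_edge_crosses[OF XY st] graph_edgeD[OF G st] by blast
  then obtain p q where pq: "e = {p, q}" "p \<in> X" "q \<in> Y"
    using e by (metis insert_commute)
  have "chain_bipartition V (E - {e}) X Y"
    using chain_bipartition_Diff_edge[OF XY G] assms(2,3) pq by simp
  with graph_Diff[OF G] show ?thesis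
    unfolding chain_graph_iff_chain_bipartition by blast
qed

theorem lemma4p5:
  fixes V :: "'a set" and E :: "'a set set" and e :: "'a set"
  assumes "chain_graph V E" and "e \<in> E"
  shows "chain_graph V (E - {e}) \<longleftrightarrow> \<not> middle_edge_of_induced_P4 V E e"
  using chain_graph_Diff_middle_edge chain_graph_Diff_edge[OF assms] by blast

end
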